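(* Let $t:\mathcal{L}_{FH}\to\mathcal{L}_{AIL}$ be defined by $t(p)=p$, $t(\neg\varphi)=\neg t(\varphi)$, $t(\varphi\wedge\psi)=t(\varphi)\wedge t(\psi)$, $t(A_i\varphi)=A_i t(\varphi)$, $t(I_i\varphi)=I_i t(\varphi)$, $t(E_i\varphi)=A_i t(\varphi)\wedge I_i t(\varphi)$. Then for every $\varphi\in\mathcal{L}_{FH}$, $\varphi$ is valid with respect to $\vDash_{FH}$ (true at every world of every epistemic model with awareness) iff $t(\varphi)$ is valid with respect to $\vDash_{AIL}$.
   Context: Let $\mathcal{P}$ be a countable set of atomic propositions and $\mathcal{G}$ a finite set of agents. An epistemic model with awareness is $M=\langle W,\{\sim_i,\mathscr{A}_i\}_{i\in\mathcal{G}},V\rangle$ where $W\neq\emptyset$, each $\sim_i$ is an equivalence relation on $W$, each $\mathscr{A}_i:W\to 2^{\mathcal{P}}$ satisfies $\mathscr{A}_i(w)=\mathscr{A}_i(v)$ whenever $(w,v)\in\sim_i$, and $V:\mathcal{P}\to 2^W$. The A-equivalence relation $\approx_i$: $(w,v)\in\approx_i$ iff $\mathscr{A}_i(w)=\mathscr{A}_i(v)$ and for every $p\in\mathscr{A}_i(w)$, $w\in V(p)$ iff $v\in V(p)$. $\sim_i\circ\approx_i=\{(w,v):\exists t\,((w,t)\in\approx_i,(t,v)\in\sim_i)\}$; $R^+$ is the transitive closure. $\mathcal{L}_{AIL}$: $\varphi::=p\mid\neg\varphi\mid\varphi\wedge\varphi\mid A_i\varphi\mid I_i\varphi\mid E_i\varphi\mid[\approx]_i\varphi\mid[\circ^+]_i\varphi$;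 $\mathcal{L}_{FH}$ is the fragment without $[\approx]_i,[\circ^+]_i$. $At(\varphi)$: atoms occurring in $\varphi$. $\vDash_{AIL}$: $M,w\vDash p$ iff $w\in V(p)$; Boolean clauses usual; $A_i\varphi$ iff $At(\varphi)\subseteq\mathscr{A}_i(w)$; $I_i\varphi$ iff $\varphi$ holds at all $\sim_i$-successors; $[\approx]_i\varphi$ iff $\varphi$ holds at all $\approx_i$-successors; $[\circ^+]_i\varphi$ iff $\varphi$ holds at all $(\sim_i\circ\approx_i)^+$-successors; $E_i\varphi$ iff $A_i\varphi$ and $[\circ^+]_i\varphi$ hold at $w$. $\vDash_{FH}$ on $\mathcal{L}_{FH}$ is the same except $M,w\vDash_{FH}E_i\varphi$ iff $M,w\vDash_{FH}A_i\varphi$ and $M,w\vDash_{FH}I_i\varphi$. *)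

theory Defs
  imports Main "HOL-Library.Countable"
begin

datatype ('p, 'a) fh_form =
    FAtom 'p
  | FNeg "('p, 'a) fh_form"
  | FAnd "('p, 'a) fh_form" "('p, 'a) fh_form"
  | FA 'a "('p, 'a) fh_form"
  | FI 'a "('p, 'a) fh_form"
  | FE 'a "('p, 'a) fh_form"

datatype ('p, 'a) ail_form =
    Atom 'p
  | Neg "('p, 'a) ail_form"
  | And "('p, 'a) ail_form" "('p, 'a) ail_form"
  | AA 'a "('p, 'a) ail_form"
  | AI 'a "('p, 'a) ail_form"
  | AE 'a "('p, 'a) ail_form"
  | Box_approx 'a "('p, 'a) ail_form"
  | Box_circ 'a "('p, 'a) ail_form"

fun at_fh :: "('p, 'a) fh_form \<Rightarrow> 'p set" where
  "at_fh (FAtom p) = {p}"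
| "at_fh (FNeg f) = at_fh f"
| "at_fh (FAnd f g) = at_fh f \<union> at_fh g"
| "at_fh (FA i f) = at_fh f"
| "at_fh (FI i f) = at_fh f"
| "at_fh (FE i f) = at_fh f"

fun at_ail :: "('p, 'a) ail_form \<Rightarrow> 'p set" where
  "at_ail (Atom p) = {p}"
| "at_ail (Neg f) = at_ail f"
| "at_ail (And f g) = at_ail f \<union> at_ail g"
| "at_ail (AA i f) = at_ail f"
| "at_ail (AI i f) = at_ail f"
| "at_ail (AE i f) = at_ail f"
| "at_ail (Box_approx i f) = at_ail f"
| "at_ail (Box_circ i f) = at_ail f"

record ('w, 'p, 'a) emodel =
  W :: "'w set"
  Sim :: "'a \<Rightarrow> ('w \<times> 'w) set"
  Aw :: "'a \<Rightarrow> 'w \<Rightarrow> 'p set"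
  Val :: "'p \<Rightarrow> 'w set"

definition is_model :: "('w, 'p, 'a) emodel \<Rightarrow> bool" where
  "is_model M \<longleftrightarrow> W M \<noteq> {}
     \<and> (\<forall>i. equiv (W M) (Sim M i))
     \<and> (\<forall>i w v. (w, v) \<in> Sim M i \<longrightarrow> Aw M i w = Aw M i v)
     \<and> (\<forall>p. Val M p \<subseteq> W M)"

definition approx_rel :: "('w, 'p, 'a) emodel \<Rightarrow> 'a \<Rightarrow> ('w \<times> 'w) set" where
  "approx_rel M i = {(w, v). w \<in> W M \<and> v \<in> W M \<and> Aw M i w = Aw M i v
      \<and> (\<forall>p \<in> Aw M i w. (w \<in> Val M p \<longleftrightarrow> v \<in> Val M p))}"

text \<open>sim_i \<circ> approx_i = {(w,v). \<exists>t. (w,t) \<in> approx_i \<and> (t,v) \<in> sim_i}, i.e. approx O sim.\<close>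
definition circ_plus :: "('w, 'p, 'a) emodel \<Rightarrow> 'a \<Rightarrow> ('w \<times> 'w) set" where
  "circ_plus M i = (approx_rel M i O Sim M i)\<^sup>+"

fun sat_ail :: "('w, 'p, 'a) emodel \<Rightarrow> 'w \<Rightarrow> ('p, 'a) ail_form \<Rightarrow> bool" where
  "sat_ail M w (Atom p) = (w \<in> Val M p)"
| "sat_ail M w (Neg f) = (\<not> sat_ail M w f)"
| "sat_ail M w (And f g) = (sat_ail M w f \<and> sat_ail M w g)"
| "sat_ail M w (AA i f) = (at_ail f \<subseteq> Aw M i w)"
| "sat_ail M w (AI i f) = (\<forall>v. (w, v) \<in> Sim M i \<longrightarrow> sat_ail M v f)"
| "sat_ail M w (AE i f) = (at_ail f \<subseteq> Aw M i w
      \<and> (\<forall>v. (w, v) \<in> circ_plus M i \<longrightarrow> sat_ail M v f))"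
| "sat_ail M w (Box_approx i f) = (\<forall>v. (w, v) \<in> approx_rel M i \<longrightarrow> sat_ail M v f)"
| "sat_ail M w (Box_circ i f) = (\<forall>v. (w, v) \<in> circ_plus M i \<longrightarrow> sat_ail M v f)"

fun sat_fh :: "('w, 'p, 'a) emodel \<Rightarrow> 'w \<Rightarrow> ('p, 'a) fh_form \<Rightarrow> bool" where
  "sat_fh M w (FAtom p) = (w \<in> Val M p)"
| "sat_fh M w (FNeg f) = (\<not> sat_fh M w f)"
| "sat_fh M w (FAnd f g) = (sat_fh M w f \<and> sat_fh M w g)"
| "sat_fh M w (FA i f) = (at_fh f \<subseteq> Aw M i w)"
| "sat_fh M w (FI i f) = (\<forall>v. (w, v) \<in> Sim M i \<longrightarrow> sat_fh M v f)"
| "sat_fh M w (FE i f) = (at_fh f \<subseteq> Aw M i w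
      \<and> (\<forall>v. (w, v) \<in> Sim M i \<longrightarrow> sat_fh M v f))"

definition valid_fh :: "'w itself \<Rightarrow> ('p, 'a) fh_form \<Rightarrow> bool" where
  "valid_fh _ f \<longleftrightarrow> (\<forall>(M :: ('w, 'p, 'a) emodel) w. is_model M \<longrightarrow> w \<in> W M \<longrightarrow> sat_fh M w f)"

definition valid_ail :: "'w itself \<Rightarrow> ('p, 'a) ail_form \<Rightarrow> bool" where
  "valid_ail _ f \<longleftrightarrow> (\<forall>(M :: ('w, 'p, 'a) emodel) w. is_model M \<longrightarrow> w \<in> W M \<longrightarrow> sat_ail M w f)"

fun tr :: "('p, 'a) fh_form \<Rightarrow> ('p, 'a) ail_form" where
  "tr (FAtom p) = Atom p"
| "tr (FNeg f) = Neg (tr f)"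
| "tr (FAnd f g) = And (tr f) (tr g)"
| "tr (FA i f) = AA i (tr f)"
| "tr (FI i f) = AI i (tr f)"
| "tr (FE i f) = And (AA i (tr f)) (AI i (tr f))"

end

theory Submission
  imports Defs
begin

lemma at_ail_tr [simp]: "at_ail (tr f) = at_fh f"
  by (induction f) auto

lemma sat_ail_tr: "sat_ail M w (tr f) \<longleftrightarrow> sat_fh M w f"
  by (induction f arbitrary: w) auto

theorem theorem2:
  fixes \<phi> :: "('p :: countable, 'a :: finite) fh_form"
  shows "valid_fh TYPE('w) \<phi> \<longleftrightarrow> valid_ail TYPE('w) (tr \<phi>)"
  unfolding valid_fh_def valid_ail_def by (simp add: sat_ail_tr)

end
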